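(* Let $\Gamma\subset\mathbb{R}^n$ be a closed $d$-Ahlfors regular set with $d<n-1$, $\Omega=\mathbb{R}^n\setminus\Gamma$, and let $0<\alpha<\alpha'$. Let $u\in W_r(\Omega)$ and suppose $S^{\alpha'}u(q)<\infty$ for $\sigma$-almost every $q\in\Gamma$. Then for every $\lambda>0$ the set $\{q\in\Gamma:S^{\alpha}u(q)>\lambda\}$ is (relatively) open in $\Gamma$.
   Context: $d$-Ahlfors regular: there is $C_0\ge1$ with $C_0^{-1}r^d\le\mathcal{H}^d(B(q,r)\cap\Gamma)\le C_0r^d$. $\delta(X)=\operatorname{dist}(X,\Gamma)$, $\sigma=\mathcal{H}^d|_\Gamma$, $dm(X)=\delta(X)^{d-n+1}dX$, $W_r(\Omega)=\{u\in L^1_{loc}(\Omega):\nabla u\in L^2_{loc}(\Omega,dm)\}$. For $a>0$, $\Gamma^a(q)=\{X\in\Omega:|X-q|<(1+a)\delta(X)\}$ and $S^au(q)=\big(\iint_{\Gamma^a(q)}|\nabla u(X)|^2\delta(X)^{1-d}dm(X)\big)^{1/2}$. *)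

theory Defs
  imports "HOL-Analysis.Analysis"
begin

section \<open>Hausdorff measure (unnormalised; the normalising constant is irrelevant here)\<close>

definition hausdorff_pre :: "real \<Rightarrow> real \<Rightarrow> ('a::metric_space) set \<Rightarrow> ennreal" where
  "hausdorff_pre d \<epsilon> A =
     (INF E \<in> {E :: nat \<Rightarrow> 'a set. A \<subseteq> (\<Union>i. E i) \<and> (\<forall>i. bounded (E i) \<and> diameter (E i) \<le> \<epsilon>)}.
        (\<Sum>i. ennreal (diameter (E i) powr d)))"

definition hausdorff :: "real \<Rightarrow> ('a::metric_space) set \<Rightarrow> ennreal" where
  "hausdorff d A = (SUP \<epsilon> \<in> {0<..}. hausdorff_pre d \<epsilon> A)"

definition ahlfors_regular :: "real \<Rightarrow> ('a::metric_space) set \<Rightarrow> bool" where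
  "ahlfors_regular d \<Gamma> \<longleftrightarrow> (\<exists>C0::real. C0 \<ge> 1 \<and>
     (\<forall>q\<in>\<Gamma>. \<forall>r>0. ennreal (r powr d / C0) \<le> hausdorff d (ball q r \<inter> \<Gamma>)
                    \<and> hausdorff d (ball q r \<inter> \<Gamma>) \<le> ennreal (C0 * r powr d)))"

definition pderiv_dir :: "'n::finite \<Rightarrow> (real^'n \<Rightarrow> real) \<Rightarrow> real^'n \<Rightarrow> real" where
  "pderiv_dir i f = (\<lambda>x. frechet_derivative f (at x) (axis i 1))"

fun pderivs :: "'n::finite list \<Rightarrow> (real^'n \<Rightarrow> real) \<Rightarrow> real^'n \<Rightarrow> real" where
  "pderivs [] f = f"
| "pderivs (i # is) f = pderiv_dir i (pderivs is f)"

definition smooth_fun :: "(real^'n::finite \<Rightarrow> real) \<Rightarrow> bool" where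
  "smooth_fun f \<longleftrightarrow> (\<forall>is x. pderivs is f differentiable (at x))"

definition test_fun :: "(real^'n::finite) set \<Rightarrow> (real^'n \<Rightarrow> real) \<Rightarrow> bool" where
  "test_fun \<Omega> \<phi> \<longleftrightarrow> smooth_fun \<phi> \<and> compact (closure {x. \<phi> x \<noteq> 0}) \<and> closure {x. \<phi> x \<noteq> 0} \<subseteq> \<Omega>"

definition locally_integrable :: "(real^'n::finite) set \<Rightarrow> (real^'n \<Rightarrow> real) \<Rightarrow> bool" where
  "locally_integrable \<Omega> f \<longleftrightarrow> (\<forall>K. compact K \<and> K \<subseteq> \<Omega> \<longrightarrow> set_integrable lebesgue K f)"

definition weak_gradient :: "(real^'n::finite) set \<Rightarrow> (real^'n \<Rightarrow> real) \<Rightarrow> (real^'n \<Rightarrow> real^'n) \<Rightarrow> bool" where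
  "weak_gradient \<Omega> u g \<longleftrightarrow>
     (\<forall>i. locally_integrable \<Omega> (\<lambda>x. g x $ i)) \<and>
     (\<forall>\<phi> i. test_fun \<Omega> \<phi> \<longrightarrow>
        (\<integral>x. u x * pderiv_dir i \<phi> x \<partial>lebesgue) = - (\<integral>x. g x $ i * \<phi> x \<partial>lebesgue))"

definition dist_to :: "(real^'n::finite) set \<Rightarrow> real^'n \<Rightarrow> real" where
  "dist_to \<Gamma> X = infdist X \<Gamma>"

text \<open>density of dm w.r.t. Lebesgue measure: delta(X)^(d-n+1)\<close>
definition m_weight :: "real \<Rightarrow> (real^'n::finite) set \<Rightarrow> real^'n \<Rightarrow> real" where
  "m_weight d \<Gamma> X = dist_to \<Gamma> X powr (d - real CARD('n) + 1)"

definition in_W_r :: "real \<Rightarrow> (real^'n::finite) set \<Rightarrow> (real^'n \<Rightarrow> real) \<Rightarrow> (real^'n \<Rightarrow> real^'n) \<Rightarrow> bool" where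
  "in_W_r d \<Gamma> u g \<longleftrightarrow> locally_integrable (- \<Gamma>) u \<and> weak_gradient (- \<Gamma>) u g \<and>
     (\<forall>K. compact K \<and> K \<subseteq> - \<Gamma> \<longrightarrow>
        (\<integral>\<^sup>+ X. indicator K X * ennreal ((norm (g X))\<^sup>2 * m_weight d \<Gamma> X) \<partial>lebesgue) < \<infinity>)"

definition cone :: "(real^'n::finite) set \<Rightarrow> real \<Rightarrow> real^'n \<Rightarrow> (real^'n) set" where
  "cone \<Gamma> a q = {X. X \<notin> \<Gamma> \<and> norm (X - q) < (1 + a) * dist_to \<Gamma> X}"

definition ennsqrt :: "ennreal \<Rightarrow> ennreal" where
  "ennsqrt x = (if x = \<infinity> then \<infinity> else ennreal (sqrt (enn2real x)))"

text \<open>square function S^a u(q), g = gradient of u\<close>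
definition square_fun :: "real \<Rightarrow> (real^'n::finite) set \<Rightarrow> real \<Rightarrow> (real^'n \<Rightarrow> real^'n) \<Rightarrow> real^'n \<Rightarrow> ennreal" where
  "square_fun d \<Gamma> a g q = ennsqrt (\<integral>\<^sup>+ X. indicator (cone \<Gamma> a q) X *
       ennreal ((norm (g X))\<^sup>2 * dist_to \<Gamma> X powr (1 - d) * m_weight d \<Gamma> X) \<partial>lebesgue)"

end

theory Submission
  imports Defs
begin

text \<open>Only the lower semicontinuity of the cone integral enters: the cone \<open>cone \<Gamma> \<alpha> q\<close> is
  defined by a strict inequality, so every point \<open>X\<close> of it lies in \<open>cone \<Gamma> \<alpha> q'\<close> for all \<open>q'\<close>
  close to \<open>q\<close>. By Fatou's lemma \<open>q \<mapsto> S\<^sup>\<alpha> u(q)\<^sup>2\<close> is therefore lower semicontinuous, and its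
  superlevel sets are open.\<close>

lemma cone_eq_infdist: "cone \<Gamma> a q = {X. norm (X - q) < (1 + a) * infdist X \<Gamma>}"
proof -
  have "X \<in> \<Gamma> \<Longrightarrow> infdist X \<Gamma> = 0" for X by (simp add: infdist_zero)
  then show ?thesis unfolding cone_def dist_to_def by force
qed

lemma open_cone: "open (cone \<Gamma> a q)"
  unfolding cone_eq_infdist
  by (intro open_Collect_less continuous_intros continuous_at_imp_continuous_on ballI
      continuous_infdist continuous_ident)

lemma cone_subset_complement: "cone \<Gamma> a q \<subseteq> - \<Gamma>"
  unfolding cone_def by auto

lemma indicator_cone_le_liminf:
  assumes "s \<longlonglongrightarrow> q"
  shows "indicator (cone \<Gamma> a q) X * h X
           \<le> liminf (\<lambda>n. indicator (cone \<Gamma> a (s n)) X * (h X :: ennreal))"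
proof (cases "X \<in> cone \<Gamma> a q")
  case True
  then have "norm (X - q) < (1 + a) * infdist X \<Gamma>" unfolding cone_eq_infdist by simp
  moreover have "(\<lambda>n. norm (X - s n)) \<longlonglongrightarrow> norm (X - q)"
    by (intro tendsto_intros assms)
  ultimately have "eventually (\<lambda>n. norm (X - s n) < (1 + a) * infdist X \<Gamma>) sequentially"
    by (simp add: order_tendstoD)
  then have "eventually (\<lambda>n. indicator (cone \<Gamma> a q) X * h X
                              \<le> indicator (cone \<Gamma> a (s n)) X * h X) sequentially"
    by eventually_elim (use True in \<open>simp add: cone_eq_infdist\<close>)
  then show ?thesis by (rule Liminf_bounded)
qed simp

lemma closed_nn_integral_le_of_liminf:
  fixes f :: "'a::first_countable_topology \<Rightarrow> 'b \<Rightarrow> ennreal"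
  assumes meas: "\<And>q. f q \<in> borel_measurable M"
    and lsc: "\<And>s q X. s \<longlonglongrightarrow> q \<Longrightarrow> f q X \<le> liminf (\<lambda>n. f (s n) X)"
  shows "closed {q. (\<integral>\<^sup>+ X. f q X \<partial>M) \<le> c}"
  unfolding closed_sequential_limits
proof (intro allI impI, elim conjE)
  fix s q assume le_c: "\<forall>n. s n \<in> {q. (\<integral>\<^sup>+ X. f q X \<partial>M) \<le> c}" and lim: "s \<longlonglongrightarrow> q"
  have "(\<integral>\<^sup>+ X. f q X \<partial>M) \<le> (\<integral>\<^sup>+ X. liminf (\<lambda>n. f (s n) X) \<partial>M)"
    by (intro nn_integral_mono lsc lim)
  also have "\<dots> \<le> liminf (\<lambda>n. \<integral>\<^sup>+ X. f (s n) X \<partial>M)"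
    by (intro nn_integral_liminf meas)
  also have "\<dots> \<le> c"
    by (rule Liminf_le[OF sequentially_bot]) (use le_c in \<open>simp add: always_eventually\<close>)
  finally show "q \<in> {q. (\<integral>\<^sup>+ X. f q X \<partial>M) \<le> c}" by simp
qed

text \<open>The compact sets \<open>K n\<close> exhaust \<open>U\<close>, so the product is a pointwise limit of the
  measurable functions \<open>indicator (K n) * f\<close>.\<close>

lemma borel_measurable_indicator_mult_if_locally_integrable:
  fixes U :: "(real^'n) set" and f :: "real^'n \<Rightarrow> real"
  assumes "open U" and li: "locally_integrable U f"
  shows "(\<lambda>x. indicator U x * f x) \<in> borel_measurable lebesgue"
proof -
  define K where "K n = cball 0 (real n) \<inter> (\<Inter>y\<in>-U. {x. 1 / Suc n \<le> dist x y})" for n :: nat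
  have compact_K: "compact (K n)" for n
    unfolding K_def
    by (intro compact_Int_closed compact_cball closed_INT ballI closed_Collect_le continuous_intros)
  have K_subset: "K n \<subseteq> U" for n
  proof
    fix x assume "x \<in> K n"
    then have "\<forall>y\<in>-U. 1 / Suc n \<le> dist x y" unfolding K_def by auto
    then show "x \<in> U" by (metis ComplI dist_self divide_pos_pos of_nat_0_less_iff zero_less_Suc
        zero_less_one linorder_not_le)
  qed
  have meas_K: "(\<lambda>x. indicator (K n) x * f x) \<in> borel_measurable lebesgue" for n
    using li compact_K K_subset unfolding locally_integrable_def set_integrable_def
    by (auto dest: borel_measurable_integrable)
  show ?thesis
  proof (rule borel_measurable_LIMSEQ_real[OF _ meas_K])
    fix x
    show "(\<lambda>n. indicator (K n) x * f x) \<longlonglongrightarrow> indicator U x * f x"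
    proof (cases "x \<in> U")
      case False
      then have "x \<notin> K n" for n using K_subset by blast
      with False show ?thesis by simp
    next
      case True
      with \<open>open U\<close> obtain e where "e > 0" and e: "ball x e \<subseteq> U" by (meson open_contains_ball)
      obtain N1 :: nat where N1: "norm x \<le> N1" using real_arch_simple by blast
      obtain N2 :: nat where "inverse (real (Suc N2)) < e" using reals_Archimedean[OF \<open>e > 0\<close>] by blast
      then have N2: "1 / real (Suc N2) < e" by (simp add: inverse_eq_divide)
      have "x \<in> K n" if "n \<ge> max N1 N2" for n
      proof -
        have "1 / Suc n \<le> dist x y" if "y \<notin> U" for y
        proof -
          have "e \<le> dist x y" using e \<open>y \<notin> U\<close> by (meson linorder_not_le mem_ball subsetD)
          moreover have "1 / Suc n \<le> 1 / Suc N2" using \<open>n \<ge> max N1 N2\<close> by (intro divide_left_mono) auto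
          ultimately show ?thesis using N2 by linarith
        qed
        moreover have "norm x \<le> n" using N1 that by (smt (verit) max.bounded_iff of_nat_le_iff)
        ultimately show ?thesis unfolding K_def by auto
      qed
      then have "eventually (\<lambda>n. indicator (K n) x * f x = indicator U x * f x) sequentially"
        using True unfolding eventually_sequentially by (intro exI[of _ "max N1 N2"]) auto
      then show ?thesis by (rule tendsto_eventually)
    qed
  qed
qed

definition square_integrand :: "real \<Rightarrow> (real^'n) set \<Rightarrow> (real^'n \<Rightarrow> real^'n) \<Rightarrow> real^'n \<Rightarrow> ennreal"
  where "square_integrand d \<Gamma> g X =
           ennreal ((norm (g X))\<^sup>2 * dist_to \<Gamma> X powr (1 - d) * m_weight d \<Gamma> X)"

lemma square_fun_eq_nn_integral:
  fixes \<Gamma> :: "(real^'n) set"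
  shows "square_fun d \<Gamma> a g q =
     ennsqrt (\<integral>\<^sup>+ X. indicator (cone \<Gamma> a q) X * (indicator (- \<Gamma>) X * square_integrand d \<Gamma> g X) \<partial>lebesgue)"
proof -
  have "indicator (cone \<Gamma> a q) X * (indicator (- \<Gamma>) X * square_integrand d \<Gamma> g X)
          = indicator (cone \<Gamma> a q) X * square_integrand d \<Gamma> g X" for X
    using cone_subset_complement[of \<Gamma> a q] by (auto split: split_indicator)
  then show ?thesis unfolding square_fun_def square_integrand_def by (simp only:)
qed

text \<open>The gradient is only locally integrable off \<open>\<Gamma>\<close>, so the integrand is cut off to \<open>- \<Gamma>\<close>
  before measurability can be shown.\<close>

lemma borel_measurable_square_integrand:
  fixes \<Gamma> :: "(real^'n) set"
  assumes "closed \<Gamma>" and "\<And>i. locally_integrable (- \<Gamma>) (\<lambda>X. g X $ i)"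
  shows "(\<lambda>X. indicator (- \<Gamma>) X * square_integrand d \<Gamma> g X) \<in> borel_measurable lebesgue"
proof -
  have comp: "(\<lambda>X. indicator (- \<Gamma>) X * g X $ i) \<in> borel_measurable lebesgue" for i
    using assms by (intro borel_measurable_indicator_mult_if_locally_integrable) auto
  have "(\<lambda>X::real^'n. infdist X \<Gamma>) \<in> borel_measurable borel"
    by (intro borel_measurable_continuous_onI continuous_at_imp_continuous_on ballI
        continuous_infdist continuous_ident)
  then have dist: "(\<lambda>X::real^'n. infdist X \<Gamma>) \<in> borel_measurable lebesgue"
    using measurable_completion measurable_lborel2 by blast
  have "indicator (- \<Gamma>) X * square_integrand d \<Gamma> g X =
          ennreal ((\<Sum>i\<in>UNIV. (indicator (- \<Gamma>) X * g X $ i)\<^sup>2) * infdist X \<Gamma> powr (1 - d)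
                   * infdist X \<Gamma> powr (d - real CARD('n) + 1))" for X
  proof (cases "X \<in> \<Gamma>")
    case False
    moreover have "(norm (g X))\<^sup>2 = (\<Sum>i\<in>UNIV. (g X $ i)\<^sup>2)"
      unfolding norm_vec_def L2_set_def by (simp add: sum_nonneg)
    ultimately show ?thesis
      unfolding square_integrand_def m_weight_def dist_to_def by simp
  qed simp
  moreover have "(\<lambda>X. ennreal ((\<Sum>i\<in>UNIV. (indicator (- \<Gamma>) X * g X $ i)\<^sup>2) * infdist X \<Gamma> powr (1 - d)
                   * infdist X \<Gamma> powr (d - real CARD('n) + 1))) \<in> borel_measurable lebesgue"
    using comp dist by measurable
  ultimately show ?thesis by simp
qed

lemma ennsqrt_gt_ennreal_iff:
  assumes "lam > 0"
  shows "ennsqrt x > ennreal lam \<longleftrightarrow> x > ennreal (lam\<^sup>2)"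
proof (cases "x = \<infinity>")
  case True then show ?thesis unfolding ennsqrt_def by simp
next
  case False
  then obtain r where r: "x = ennreal r" "r \<ge> 0" by (cases x) auto
  then have "ennsqrt x = ennreal (sqrt r)" unfolding ennsqrt_def by simp
  moreover have "lam < sqrt r \<longleftrightarrow> lam\<^sup>2 < r"
    using assms real_sqrt_less_iff[of "lam\<^sup>2" r] by simp
  ultimately show ?thesis using assms r by (simp add: ennreal_less_iff)
qed

theorem lemma3p6:
  fixes \<Gamma> :: "(real^'n) set" and d \<alpha> \<alpha>' lam :: real
    and u :: "real^'n \<Rightarrow> real" and g :: "real^'n \<Rightarrow> real^'n"
  assumes "closed \<Gamma>" and "0 < d" and "ahlfors_regular d \<Gamma>"
    and "d < real CARD('n) - 1"
    and "0 < \<alpha>" and "\<alpha> < \<alpha>'"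
    and "in_W_r d \<Gamma> u g"
    and "hausdorff d {q \<in> \<Gamma>. \<not> (square_fun d \<Gamma> \<alpha>' g q < \<infinity>)} = 0"
    and "0 < lam"
  shows "openin (top_of_set \<Gamma>) {q \<in> \<Gamma>. square_fun d \<Gamma> \<alpha> g q > ennreal lam}"
proof -
  define G where "G X = indicator (- \<Gamma>) X * square_integrand d \<Gamma> g X" for X
  define F where "F q = (\<integral>\<^sup>+ X. indicator (cone \<Gamma> \<alpha> q) X * G X \<partial>lebesgue)" for q
  have G_meas: "G \<in> borel_measurable lebesgue"
    unfolding G_def using assms(7)
    by (intro borel_measurable_square_integrand[OF \<open>closed \<Gamma>\<close>])
       (auto simp: in_W_r_def weak_gradient_def)
  have cone_meas: "cone \<Gamma> \<alpha> q \<in> sets lebesgue" for q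
    using borel_open[OF open_cone[of \<Gamma> \<alpha> q]] by (simp add: sets_completionI_sets)
  have integrand_meas: "(\<lambda>X. indicator (cone \<Gamma> \<alpha> q) X * G X) \<in> borel_measurable lebesgue" for q
    by (rule borel_measurable_times_ennreal[OF borel_measurable_indicator[OF cone_meas] G_meas])
  have closed_sublevel: "closed {q. F q \<le> ennreal (lam\<^sup>2)}"
    unfolding F_def
  proof (rule closed_nn_integral_le_of_liminf)
    show "(\<lambda>X. indicator (cone \<Gamma> \<alpha> q) X * G X) \<in> borel_measurable lebesgue" for q
      by (rule integrand_meas)
  qed (rule indicator_cone_le_liminf)
  have "square_fun d \<Gamma> \<alpha> g q > ennreal lam \<longleftrightarrow> \<not> F q \<le> ennreal (lam\<^sup>2)" for q
    unfolding square_fun_eq_nn_integral F_def G_def not_le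
    by (rule ennsqrt_gt_ennreal_iff[OF \<open>0 < lam\<close>])
  then have superlevel_eq: "{q \<in> \<Gamma>. square_fun d \<Gamma> \<alpha> g q > ennreal lam} = \<Gamma> \<inter> - {q. F q \<le> ennreal (lam\<^sup>2)}"
    by blast
  show ?thesis
    unfolding superlevel_eq using closed_sublevel by (intro openin_open_Int open_Compl)
qed

end
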